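(* Let $\mathcal{I}$ be an index set, $S$ a non-empty finite set, and $\emptyset\ne\mathcal{K}_\iota\subseteq S$ for $\iota\in\mathcal{I}$; define $\varepsilon_{i,j}=1$ if $\mathcal{K}_i\cap\mathcal{K}_j=\emptyset$ and $\varepsilon_{i,j}=0$ otherwise. Let $(\iota_1,\dots,\iota_k)\in I^\varepsilon_k$, and let $\sigma\in\tilde S_k$ be such that for every $s\in S$ the induced permutation $\sigma_s$ of $J_s$ describes a non-crossing partition of $J_s$. Then $\sigma$ has at least one fixed point.
   Context: $I^\varepsilon_k$ is the set of $(i_1,\dots,i_k)\in\mathcal{I}^k$ such that whenever $i_j=i_\ell$ with $j<\ell$ there is $m$ with $j<m<\ell$, $i_m\ne i_j$ and $\varepsilon_{i_ji_m}=0$. $\tilde S_k=\{\sigma\in S_k:\iota_{\sigma(j)}=\iota_j\text{ for all }j\}$. For $s\in S$, $J_s=\{j\in\{1,\dots,k\}:s\in\mathcal{K}_{\iota_j}\}$, which is preserved by every $\sigma\in\tilde S_k$; $\sigma_s$ is the restriction of $\sigma$ to $J_s$. A permutation describes a non-crossing partition if the partition into its cycles is non-crossing with respect to the natural order of $J_s$. *)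

theory Defs
  imports "HOL-Combinatorics.Permutations"
begin

text \<open>Tuples (iota_1,...,iota_k) are functions nat => 'i, positions 1..k.\<close>

definition eps :: "('i \<Rightarrow> 's set) \<Rightarrow> 'i \<Rightarrow> 'i \<Rightarrow> nat" where
  "eps K i j = (if K i \<inter> K j = {} then 1 else 0)"

definition I_eps :: "'i set \<Rightarrow> ('i \<Rightarrow> 's set) \<Rightarrow> nat \<Rightarrow> (nat \<Rightarrow> 'i) set" where
  "I_eps I K k = {\<iota>. (\<forall>j\<in>{1..k}. \<iota> j \<in> I) \<and>
     (\<forall>j l. 1 \<le> j \<and> j < l \<and> l \<le> k \<and> \<iota> j = \<iota> l \<longrightarrow>
        (\<exists>m. j < m \<and> m < l \<and> \<iota> m \<noteq> \<iota> j \<and> eps K (\<iota> j) (\<iota> m) = 0))}"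

definition S_tilde :: "nat \<Rightarrow> (nat \<Rightarrow> 'i) \<Rightarrow> (nat \<Rightarrow> nat) set" where
  "S_tilde k \<iota> = {\<sigma>. \<sigma> permutes {1..k} \<and> (\<forall>j\<in>{1..k}. \<iota> (\<sigma> j) = \<iota> j)}"

definition J_set :: "('i \<Rightarrow> 's set) \<Rightarrow> nat \<Rightarrow> (nat \<Rightarrow> 'i) \<Rightarrow> 's \<Rightarrow> nat set" where
  "J_set K k \<iota> s = {j\<in>{1..k}. s \<in> K (\<iota> j)}"

definition restrict_perm :: "(nat \<Rightarrow> nat) \<Rightarrow> nat set \<Rightarrow> nat \<Rightarrow> nat" where
  "restrict_perm \<sigma> J = (\<lambda>j. if j \<in> J then \<sigma> j else j)"

definition cycle_partition :: "(nat \<Rightarrow> nat) \<Rightarrow> nat set \<Rightarrow> nat set set" where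
  "cycle_partition f J = {{(f ^^ n) j | n. True} | j. j \<in> J}"

definition noncrossing_partition :: "nat set set \<Rightarrow> bool" where
  "noncrossing_partition P \<longleftrightarrow>
     (\<forall>B1\<in>P. \<forall>B2\<in>P. B1 \<noteq> B2 \<longrightarrow>
        \<not> (\<exists>a\<in>B1. \<exists>c\<in>B1. \<exists>b\<in>B2. \<exists>d\<in>B2. a < b \<and> b < c \<and> c < d))"

definition describes_noncrossing :: "(nat \<Rightarrow> nat) \<Rightarrow> nat set \<Rightarrow> bool" where
  "describes_noncrossing f J \<longleftrightarrow> noncrossing_partition (cycle_partition f J)"

end

theory Submission
  imports Defs
begin

text \<open>
  If \<sigma> had no fixed point, take x whose step to \<sigma> x is shortest and let j < l be x and \<sigma> x.
  Since \<sigma> preserves \<iota>, \<iota> j = \<iota> l, so membership in I_eps yields j < m < l with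
  \<iota> m \<noteq> \<iota> j and some s in K (\<iota> j) \<inter> K (\<iota> m). The step from m to \<sigma> m is at least
  as long, so \<sigma> m lies outside [j, l]. Hence in J_s the cycle of \<sigma>_s through j, l and the
  one through m, \<sigma> m cross; being noncrossing they coincide, contradicting that \<iota> is
  constant on cycles of \<sigma>.
\<close>

definition forward_orbit :: "('a \<Rightarrow> 'a) \<Rightarrow> 'a \<Rightarrow> 'a set" where
  "forward_orbit f x = {(f ^^ n) x | n. True}"

lemma cycle_partition_eq_image: "cycle_partition f J = forward_orbit f ` J"
  by (auto simp: cycle_partition_def forward_orbit_def)

lemma self_image_in_forward_orbit: "x \<in> forward_orbit f x" "f x \<in> forward_orbit f x"
proof -
  have "x = (f ^^ 0) x" "f x = (f ^^ 1) x" by simp_all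
  then show "x \<in> forward_orbit f x" "f x \<in> forward_orbit f x"
    unfolding forward_orbit_def by blast+
qed

lemma funpow_in_invariant_set:
  assumes "f ` A \<subseteq> A" and "x \<in> A"
  shows "(f ^^ n) x \<in> A"
  using assms by (induction n) auto

lemma forward_orbit_subset:
  assumes "f ` A \<subseteq> A" and "x \<in> A"
  shows "forward_orbit f x \<subseteq> A"
  using funpow_in_invariant_set[OF assms] by (auto simp: forward_orbit_def)

lemma funpow_restrict_perm:
  assumes "\<sigma> ` J \<subseteq> J" and "x \<in> J"
  shows "(restrict_perm \<sigma> J ^^ n) x = (\<sigma> ^^ n) x"
proof (induction n)
  case (Suc n)
  have "(\<sigma> ^^ n) x \<in> J" using funpow_in_invariant_set[OF assms] .
  then show ?case using Suc by (simp add: restrict_perm_def)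
qed simp

lemma forward_orbit_restrict_perm:
  assumes "\<sigma> ` J \<subseteq> J" and "x \<in> J"
  shows "forward_orbit (restrict_perm \<sigma> J) x = forward_orbit \<sigma> x"
  using funpow_restrict_perm[OF assms] by (simp add: forward_orbit_def)

lemma noncrossing_cycle_partition_same_orbit:
  assumes "noncrossing_partition (cycle_partition f J)" and "x \<in> J" and "y \<in> J"
    and "a \<in> forward_orbit f x" "c \<in> forward_orbit f x"
    and "b \<in> forward_orbit f y" "d \<in> forward_orbit f y"
    and "a < b" "b < c" "c < d"
  shows "forward_orbit f x = forward_orbit f y"
proof (rule ccontr)
  assume "forward_orbit f x \<noteq> forward_orbit f y"
  moreover have "forward_orbit f x \<in> cycle_partition f J" "forward_orbit f y \<in> cycle_partition f J"
    using assms(2,3) by (simp_all add: cycle_partition_eq_image)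
  ultimately show False
    using assms(1,4-) unfolding noncrossing_partition_def by meson
qed

lemma S_tilde_apply:
  assumes "\<sigma> \<in> S_tilde k \<iota>" and "y \<in> {1..k}"
  shows "\<sigma> y \<in> {1..k}" and "\<iota> (\<sigma> y) = \<iota> y"
  using assms permutes_in_image by (fastforce simp: S_tilde_def)+

lemma S_tilde_image_J_set:
  assumes "\<sigma> \<in> S_tilde k \<iota>"
  shows "\<sigma> ` J_set K k \<iota> s \<subseteq> J_set K k \<iota> s"
  using S_tilde_apply[OF assms] by (auto simp: J_set_def)

lemma J_set_subset: "J_set K k \<iota> s \<subseteq> {1..k}"
  by (auto simp: J_set_def)

lemma S_tilde_forward_orbit_fibre:
  assumes "\<sigma> \<in> S_tilde k \<iota>" and "x \<in> {1..k}" and "y \<in> forward_orbit \<sigma> x"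
  shows "\<iota> y = \<iota> x"
proof -
  have "\<sigma> ` {y\<in>{1..k}. \<iota> y = \<iota> x} \<subseteq> {y\<in>{1..k}. \<iota> y = \<iota> x}"
    using S_tilde_apply[OF assms(1)] by auto
  then show ?thesis using forward_orbit_subset assms(2,3) by fastforce
qed

lemma S_tilde_noncrossing_same_fibre:
  assumes "\<sigma> \<in> S_tilde k \<iota>" and "\<sigma> ` J \<subseteq> J" "J \<subseteq> {1..k}"
    and "describes_noncrossing (restrict_perm \<sigma> J) J" and "x \<in> J" "y \<in> J"
    and "j \<in> forward_orbit \<sigma> x" "l \<in> forward_orbit \<sigma> x"
    and "m \<in> forward_orbit \<sigma> y" "m' \<in> forward_orbit \<sigma> y"
    and "j < m" "m < l" "m' < j \<or> l < m'"
  shows "\<iota> x = \<iota> y"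
proof -
  have noncrossing: "noncrossing_partition (cycle_partition (restrict_perm \<sigma> J) J)"
    using assms(4) by (simp add: describes_noncrossing_def)
  have orbit_eq: "forward_orbit (restrict_perm \<sigma> J) x = forward_orbit \<sigma> x"
    "forward_orbit (restrict_perm \<sigma> J) y = forward_orbit \<sigma> y"
    using forward_orbit_restrict_perm[OF assms(2)] assms(5,6) by simp_all
  from assms(13) have "forward_orbit \<sigma> x = forward_orbit \<sigma> y"
  proof
    assume "m' < j"
    from noncrossing_cycle_partition_same_orbit[OF noncrossing assms(6,5), unfolded orbit_eq,
        OF assms(10,9,7,8) this assms(11,12)]
    show ?thesis ..
  next
    assume "l < m'"
    from noncrossing_cycle_partition_same_orbit[OF noncrossing assms(5,6), unfolded orbit_eq,
        OF assms(7-10) assms(11,12) this]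
    show ?thesis .
  qed
  then have "x \<in> forward_orbit \<sigma> y" using self_image_in_forward_orbit(1) by metis
  from S_tilde_forward_orbit_fibre[OF assms(1) subsetD[OF assms(3,6)] this] show ?thesis .
qed

lemma I_eps_mem:
  assumes "\<iota> \<in> I_eps I K k" and "j \<in> {1..k}"
  shows "\<iota> j \<in> I"
  using assms by (simp add: I_eps_def)

lemma I_eps_overlap_between:
  assumes "\<iota> \<in> I_eps I K k" and "1 \<le> j" "j < l" "l \<le> k" and "\<iota> j = \<iota> l"
  obtains m where "j < m" "m < l" "\<iota> m \<noteq> \<iota> j" "K (\<iota> j) \<inter> K (\<iota> m) \<noteq> {}"
proof -
  have "\<exists>m. j < m \<and> m < l \<and> \<iota> m \<noteq> \<iota> j \<and> eps K (\<iota> j) (\<iota> m) = 0"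
    using assms unfolding I_eps_def by blast
  then show ?thesis using that by (auto simp: eps_def split: if_splits)
qed

text \<open>Take x minimising the length of its step to f x: a step starting strictly between x and
  f x and ending in the closed interval between them would be shorter.\<close>

lemma exists_least_displacement:
  fixes f :: "nat \<Rightarrow> nat"
  assumes "A \<noteq> {}"
  obtains x where "x \<in> A"
    and "\<And>m. m \<in> A \<Longrightarrow> min x (f x) < m \<Longrightarrow> m < max x (f x) \<Longrightarrow>
      f m < min x (f x) \<or> max x (f x) < f m"
proof -
  obtain x where x: "x \<in> A"
    and least: "\<And>m. m \<in> A \<Longrightarrow> max x (f x) - min x (f x) \<le> max m (f m) - min m (f m)"
    using ex_has_least_nat[of "\<lambda>x. x \<in> A" _ "\<lambda>y. max y (f y) - min y (f y)"] assms by blast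
  have "f m < min x (f x) \<or> max x (f x) < f m"
    if "m \<in> A" "min x (f x) < m" "m < max x (f x)" for m
    using least[OF that(1)] that(2,3)
    by (cases "x \<le> f x"; cases "m \<le> f m"; simp add: min_def max_def; arith)
  then show ?thesis using that x by blast
qed

theorem mainTheorem4:
  fixes I :: "'i set" and S :: "'s set" and K :: "'i \<Rightarrow> 's set"
    and k :: nat and \<iota> :: "nat \<Rightarrow> 'i" and \<sigma> :: "nat \<Rightarrow> nat"
  assumes "finite S" and "S \<noteq> {}"
    and "\<forall>x\<in>I. K x \<noteq> {} \<and> K x \<subseteq> S"
    and "k \<ge> 1"
    and "\<iota> \<in> I_eps I K k"
    and "\<sigma> \<in> S_tilde k \<iota>"
    and "\<forall>s\<in>S. describes_noncrossing (restrict_perm \<sigma> (J_set K k \<iota> s)) (J_set K k \<iota> s)"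
  shows "\<exists>j\<in>{1..k}. \<sigma> j = j"
proof (rule ccontr)
  assume no_fixpoint: "\<not> (\<exists>j\<in>{1..k}. \<sigma> j = j)"
  obtain x where x: "x \<in> {1..k}" and least:
    "\<And>m. m \<in> {1..k} \<Longrightarrow> min x (\<sigma> x) < m \<Longrightarrow> m < max x (\<sigma> x) \<Longrightarrow>
      \<sigma> m < min x (\<sigma> x) \<or> max x (\<sigma> x) < \<sigma> m"
    using exists_least_displacement[of "{1..k}"] assms(4) by auto
  define j l where "j = min x (\<sigma> x)" and "l = max x (\<sigma> x)"
  have "\<sigma> x \<noteq> x" using no_fixpoint x by blast
  then have jl: "1 \<le> j" "j < l" "l \<le> k" "\<iota> j = \<iota> x" "\<iota> l = \<iota> x"
    using x S_tilde_apply[OF assms(6) x] by (auto simp: j_def l_def min_def max_def)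
  then obtain m where m: "j < m" "m < l" "\<iota> m \<noteq> \<iota> x" and "K (\<iota> x) \<inter> K (\<iota> m) \<noteq> {}"
    using I_eps_overlap_between[OF assms(5)] by metis
  then obtain s where s: "s \<in> K (\<iota> x)" "s \<in> K (\<iota> m)" by blast
  have "m \<in> {1..k}" using m jl by auto
  then have outside: "\<sigma> m < j \<or> l < \<sigma> m" using least m(1,2) by (simp add: j_def l_def)
  have "s \<in> S" using assms(3) I_eps_mem[OF assms(5) x] s(1) by blast
  have in_J: "x \<in> J_set K k \<iota> s" "m \<in> J_set K k \<iota> s"
    using x s \<open>m \<in> {1..k}\<close> by (auto simp: J_set_def)
  have orbits: "j \<in> forward_orbit \<sigma> x" "l \<in> forward_orbit \<sigma> x"
    "m \<in> forward_orbit \<sigma> m" "\<sigma> m \<in> forward_orbit \<sigma> m"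
    by (simp_all add: j_def l_def min_def max_def self_image_in_forward_orbit)
  have "\<iota> x = \<iota> m"
    using S_tilde_noncrossing_same_fibre[OF assms(6) S_tilde_image_J_set[OF assms(6)] J_set_subset
        assms(7)[rule_format, OF \<open>s \<in> S\<close>] in_J orbits m(1,2) outside] .
  with m(3) show False by simp
qed

end
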